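(* Let $f:X\to\mathcal G$ be a convex function and $x_0\in\operatorname{dom} f$. Then $x_0$ solves the strict scalarized Stampacchia inequality, i.e. $$\forall x\in X,\ \forall z^*\in C^-\setminus\{0\}:\quad \varphi_{f,z^*}(x_0)=-\infty\ \text{ or }\ 0\le \varphi'_{f,z^*}(x_0,x-x_0),$$ if and only if $f(x_0)=\inf f[X]$.
   Context: $X$ is a real linear space and $Z$ a real locally convex Hausdorff space with topological dual $Z^*$. $C\subseteq Z$ is a closed convex cone with $0\in C$ such that $C^-=\{z^*\in Z^*: z^*(c)\le 0\ \forall c\in C\}$ satisfies $C^-\setminus\{0\}\ne\emptyset$. Let $\mathcal G=\{A\subseteq Z: A=\operatorname{cl}\operatorname{co}(A+C)\}$ (it contains $\emptyset$ and $Z$). For $A,B\in\mathcal G$: $A\oplus B=\operatorname{cl}\{a+b: a\in A,b\in B\}$, $tA=\{ta:a\in A\}$ for $t>0$. A function $f:X\to\mathcal G$ is convex if $f(tx_1+(1-t)x_2)\supseteq tf(x_1)\oplus(1-t)f(x_2)$ for all $x_1,x_2\in X$, $t\in(0,1)$; $\operatorname{dom} f=\{x: f(x)\neq\emptyset\}$; $\inf f[X]=\operatorname{cl}\operatorname{co}\bigcup_{x\in X}f(x)$. On $\overline{\mathbb R}=\mathbb R\cup\{\pm\infty\}$ use the inf-addition $\dot+$ (usual sum, with $r\dot+(+\infty)=+\infty$ for every $r$, in particular $(-\infty)\dot+(+\infty)=+\infty$) and the inf-residuation $r\ominus s=\inf\{t\in\mathbb R: r\le s\dot+ t\}$ (with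 $\inf\emptyset=+\infty$); $\frac1t(\pm\infty)=\pm\infty$ for $t>0$. For $z^*\in C^-\setminus\{0\}$, $\varphi_{f,z^*}(x)=\inf\{-z^*(z): z\in f(x)\}$ (equal to $+\infty$ if $f(x)=\emptyset$). For $\varphi:X\to\overline{\mathbb R}$, $\varphi'(x,u)=\inf_{t>0}\frac1t\big(\varphi(x+tu)\ominus\varphi(x)\big)$; $\varphi'_{f,z^*}$ denotes this derivative of $\varphi_{f,z^*}$. *)

theory Defs
  imports "HOL-Analysis.Analysis" "HOL-Library.Extended_Real"
begin

text \<open>Real locally convex Hausdorff topological vector space structure on the type 'z
  (Hausdorff is given by the sort t2_space).\<close>
definition lc_tvs :: "'z::{real_vector,t2_space} itself \<Rightarrow> bool" where
  "lc_tvs _ \<longleftrightarrow>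
     continuous_on UNIV (\<lambda>p::'z \<times> 'z. fst p + snd p) \<and>
     continuous_on UNIV (\<lambda>p::real \<times> 'z. fst p *\<^sub>R snd p) \<and>
     (\<forall>U::'z set. open U \<and> 0 \<in> U \<longrightarrow> (\<exists>V. open V \<and> convex V \<and> 0 \<in> V \<and> V \<subseteq> U))"

definition top_dual :: "('z::{real_vector,topological_space} \<Rightarrow> real) set" where
  "top_dual = {zs. linear zs \<and> continuous_on UNIV zs}"

definition neg_dual_cone :: "'z::{real_vector,topological_space} set \<Rightarrow> ('z \<Rightarrow> real) set" where
  "neg_dual_cone C = {zs \<in> top_dual. \<forall>c\<in>C. zs c \<le> 0}"

definition closed_convex_cone :: "'z::{real_vector,topological_space} set \<Rightarrow> bool" where
  "closed_convex_cone C \<longleftrightarrow> closed C \<and> convex C \<and> cone C \<and> 0 \<in> C"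

definition Gspace :: "'z::{real_vector,topological_space} set \<Rightarrow> 'z set set" where
  "Gspace C = {A. A = closure (convex hull {a + c | a c. a \<in> A \<and> c \<in> C})}"

definition oplus_set :: "'z::{real_vector,topological_space} set \<Rightarrow> 'z set \<Rightarrow> 'z set" where
  "oplus_set A B = closure {a + b | a b. a \<in> A \<and> b \<in> B}"

definition G_convex :: "'z::{real_vector,topological_space} set \<Rightarrow> ('x::real_vector \<Rightarrow> 'z set) \<Rightarrow> bool" where
  "G_convex C f \<longleftrightarrow> (\<forall>x. f x \<in> Gspace C) \<and>
     (\<forall>x1 x2 t. 0 < t \<and> t < 1 \<longrightarrow>
        oplus_set ((\<lambda>z. t *\<^sub>R z) ` f x1) ((\<lambda>z. (1 - t) *\<^sub>R z) ` f x2)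
          \<subseteq> f (t *\<^sub>R x1 + (1 - t) *\<^sub>R x2))"

definition dom_G :: "('x \<Rightarrow> 'z set) \<Rightarrow> 'x set" where
  "dom_G f = {x. f x \<noteq> {}}"

definition inf_image :: "('x \<Rightarrow> 'z::{real_vector,topological_space} set) \<Rightarrow> 'z set" where
  "inf_image f = closure (convex hull (\<Union>x. f x))"

definition inf_add :: "ereal \<Rightarrow> ereal \<Rightarrow> ereal" where
  "inf_add r s = (if r = \<infinity> \<or> s = \<infinity> then \<infinity>
                  else if r = -\<infinity> \<or> s = -\<infinity> then -\<infinity>
                  else ereal (real_of_ereal r + real_of_ereal s))"

definition inf_res :: "ereal \<Rightarrow> ereal \<Rightarrow> ereal" where
  "inf_res r s = Inf {ereal t | t. r \<le> inf_add s (ereal t)}"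

definition scal_fun :: "('x \<Rightarrow> 'z set) \<Rightarrow> ('z \<Rightarrow> real) \<Rightarrow> 'x \<Rightarrow> ereal" where
  "scal_fun f zs x = Inf {ereal (- zs z) | z. z \<in> f x}"

definition dir_deriv :: "('x::real_vector \<Rightarrow> ereal) \<Rightarrow> 'x \<Rightarrow> 'x \<Rightarrow> ereal" where
  "dir_deriv \<phi> x u = (INF t\<in>{0<..}. ereal (1 / t) * inf_res (\<phi> (x + t *\<^sub>R u)) (\<phi> x))"

end

theory Submission
  imports Defs
begin

text \<open>If every value \<open>f x\<close> is contained in \<open>f x0\<close>, then each scalarization
  \<open>scal_fun f L\<close> attains its minimum at \<open>x0\<close>, so its directional derivatives there are
  nonnegative. Conversely, if some \<open>z \<in> f x\<close> lies outside \<open>f x0\<close>, separate \<open>z\<close> strictly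
  from the closed convex set \<open>f x0\<close> by a continuous linear functional; as \<open>f x0 + C \<subseteq> f x0\<close>,
  this functional lies in \<open>C\<^sup>-\<close>, and convexity of \<open>f\<close> makes the corresponding
  scalarization strictly smaller at the midpoint of \<open>x0\<close> and \<open>x\<close>, a negative directional
  derivative. The separation theorem for locally convex spaces comes from the dominated
  extension theorem of Hahn--Banach applied to the Minkowski functional of an open convex
  neighbourhood.\<close>

section \<open>Hahn--Banach\<close>

text \<open>Partial linear functionals are encoded by their graphs, single-valued linear subspaces of
  \<open>Z \<times> \<real>\<close>, so that Zorn's lemma applies to the inclusion order.\<close>

definition dominated_graph :: "('z::real_vector \<Rightarrow> real) \<Rightarrow> ('z \<times> real) set \<Rightarrow> bool" where
  "dominated_graph p G \<longleftrightarrow>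
     (\<forall>x a y b. (x, a) \<in> G \<longrightarrow> (y, b) \<in> G \<longrightarrow> (x + y, a + b) \<in> G) \<and>
     (\<forall>x a c. (x, a) \<in> G \<longrightarrow> (c *\<^sub>R x, c * a) \<in> G) \<and>
     (\<forall>x a b. (x, a) \<in> G \<longrightarrow> (x, b) \<in> G \<longrightarrow> a = b) \<and>
     (\<forall>x a. (x, a) \<in> G \<longrightarrow> a \<le> p x)"

lemma dominated_graphD:
  assumes "dominated_graph p G"
  shows dominated_graph_add: "\<And>x a y b. (x, a) \<in> G \<Longrightarrow> (y, b) \<in> G \<Longrightarrow> (x + y, a + b) \<in> G"
    and dominated_graph_scaleR: "\<And>x a c. (x, a) \<in> G \<Longrightarrow> (c *\<^sub>R x, c * a) \<in> G"
    and dominated_graph_unique: "\<And>x a b. (x, a) \<in> G \<Longrightarrow> (x, b) \<in> G \<Longrightarrow> a = b"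
    and dominated_graph_le: "\<And>x a. (x, a) \<in> G \<Longrightarrow> a \<le> p x"
  using assms unfolding dominated_graph_def by blast+

lemma dominated_graph_Union_chain:
  assumes "\<C> \<in> chains {G. dominated_graph p G}"
  shows "dominated_graph p (\<Union>\<C>)"
proof -
  have ok: "\<And>G. G \<in> \<C> \<Longrightarrow> dominated_graph p G"
    using assms unfolding chains_def by blast
  have common: "\<exists>G\<in>\<C>. u \<in> G \<and> v \<in> G" if "u \<in> \<Union>\<C>" "v \<in> \<Union>\<C>" for u v
    using that assms unfolding chains_def chain_subset_def by blast
  show ?thesis
    unfolding dominated_graph_def
  proof (intro conjI allI impI)
    fix x a y b assume "(x, a) \<in> \<Union>\<C>" "(y, b) \<in> \<Union>\<C>"
    with common obtain G where "G \<in> \<C>" "(x, a) \<in> G" "(y, b) \<in> G" by meson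
    then show "(x + y, a + b) \<in> \<Union>\<C>" using dominated_graph_add[OF ok] by blast
  next
    fix x a c assume "(x, a) \<in> \<Union>\<C>"
    then show "(c *\<^sub>R x, c * a) \<in> \<Union>\<C>" using dominated_graph_scaleR[OF ok] by blast
  next
    fix x a b assume "(x, a) \<in> \<Union>\<C>" "(x, b) \<in> \<Union>\<C>"
    with common obtain G where "G \<in> \<C>" "(x, a) \<in> G" "(x, b) \<in> G" by meson
    then show "a = b" using dominated_graph_unique[OF ok] by blast
  next
    fix x a assume "(x, a) \<in> \<Union>\<C>"
    then show "a \<le> p x" using dominated_graph_le[OF ok] by blast
  qed
qed

lemma dominated_graph_extend_by:
  fixes p :: "'z::real_vector \<Rightarrow> real"
  assumes hom: "\<And>x r. r > 0 \<Longrightarrow> p (r *\<^sub>R x) = r * p x"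
    and M: "dominated_graph p M"
    and x1: "\<And>a. (x1, a) \<notin> M"
    and lower: "\<And>x a. (x, a) \<in> M \<Longrightarrow> a - p (x - x1) \<le> c"
    and upper: "\<And>y b. (y, b) \<in> M \<Longrightarrow> c \<le> p (y + x1) - b"
  shows "dominated_graph p {(x + t *\<^sub>R x1, a + t * c) | x a t. (x, a) \<in> M}"
    (is "dominated_graph p ?M'")
  unfolding dominated_graph_def
proof (intro conjI allI impI)
  fix u a v b assume "(u, a) \<in> ?M'" "(v, b) \<in> ?M'"
  then obtain x a0 t y b0 s where "(x, a0) \<in> M" "(y, b0) \<in> M" "u = x + t *\<^sub>R x1" "a = a0 + t * c"
    "v = y + s *\<^sub>R x1" "b = b0 + s * c" by blast
  then show "(u + v, a + b) \<in> ?M'"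
    by (intro CollectI exI[of _ "x + y"] exI[of _ "a0 + b0"] exI[of _ "t + s"])
       (auto simp: dominated_graph_add[OF M] algebra_simps)
next
  fix u a r assume "(u, a) \<in> ?M'"
  then obtain x a0 t where "(x, a0) \<in> M" "u = x + t *\<^sub>R x1" "a = a0 + t * c" by blast
  moreover have "(r *\<^sub>R u, r * a) = (r *\<^sub>R x + (r * t) *\<^sub>R x1, r * a0 + (r * t) * c)"
    using \<open>u = x + t *\<^sub>R x1\<close> \<open>a = a0 + t * c\<close> by (simp add: algebra_simps)
  ultimately show "(r *\<^sub>R u, r * a) \<in> ?M'" using dominated_graph_scaleR[OF M] by blast
next
  fix u a b assume "(u, a) \<in> ?M'" "(u, b) \<in> ?M'"
  then obtain x a0 t y b0 s where xa: "(x, a0) \<in> M" and yb: "(y, b0) \<in> M"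
    and u: "u = x + t *\<^sub>R x1" "u = y + s *\<^sub>R x1" and ab: "a = a0 + t * c" "b = b0 + s * c"
    by blast
  have "t = s"
  proof (rule ccontr)
    assume "t \<noteq> s"
    have "(x - y, a0 - b0) \<in> M"
      using dominated_graph_add[OF M xa dominated_graph_scaleR[OF M yb, of "-1"]] by simp
    then have "((1 / (s - t)) *\<^sub>R (x - y), (1 / (s - t)) * (a0 - b0)) \<in> M"
      by (rule dominated_graph_scaleR[OF M])
    moreover have "x - y = (s - t) *\<^sub>R x1"
      using u by (simp add: algebra_simps)
    then have "(1 / (s - t)) *\<^sub>R (x - y) = x1"
      using \<open>t \<noteq> s\<close> by simp
    ultimately show False using x1 by simp
  qed
  then have "a0 = b0" using u xa yb dominated_graph_unique[OF M] by simp
  then show "a = b" using ab \<open>t = s\<close> by simp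
next
  fix u a assume "(u, a) \<in> ?M'"
  then obtain x a0 t where xa: "(x, a0) \<in> M" and u: "u = x + t *\<^sub>R x1" and a: "a = a0 + t * c"
    by blast
  consider "t > 0" | "t = 0" | "t < 0" by linarith
  then show "a \<le> p u"
  proof cases
    case 1
    have "t * c \<le> t * (p ((1 / t) *\<^sub>R x + x1) - (1 / t) * a0)"
      using upper[OF dominated_graph_scaleR[OF M xa, of "1 / t"]] 1 by (intro mult_left_mono) auto
    also have "\<dots> = p (t *\<^sub>R ((1 / t) *\<^sub>R x + x1)) - a0"
      using 1 hom[OF 1] by (simp add: right_diff_distrib)
    finally show ?thesis using 1 u a by (simp add: scaleR_add_right)
  next
    case 2
    then show ?thesis using u a dominated_graph_le[OF M xa] by simp
  next
    case 3
    have "(- t) * ((- 1 / t) * a0 - p ((- 1 / t) *\<^sub>R x - x1)) \<le> (- t) * c"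
      using lower[OF dominated_graph_scaleR[OF M xa, of "- 1 / t"]] 3 by (intro mult_left_mono) auto
    then have "a \<le> (- t) * p ((- 1 / t) *\<^sub>R x - x1)"
      using 3 a by (simp add: right_diff_distrib)
    also have "\<dots> = p ((- t) *\<^sub>R ((- 1 / t) *\<^sub>R x - x1))"
      using 3 hom[of "- t"] by simp
    finally show ?thesis using 3 u by (simp add: scaleR_diff_right)
  qed
qed

lemma dominated_graph_extend:
  fixes p :: "'z::real_vector \<Rightarrow> real"
  assumes sub: "\<And>x y. p (x + y) \<le> p x + p y"
    and hom: "\<And>x r. r > 0 \<Longrightarrow> p (r *\<^sub>R x) = r * p x"
    and M: "dominated_graph p M" and M0: "(0, 0) \<in> M"
    and x1: "\<And>a. (x1, a) \<notin> M"
  shows "\<exists>M'. dominated_graph p M' \<and> M \<subset> M'"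
proof -
  \<comment> \<open>sublinearity puts every lower bound for the new value below every upper bound\<close>
  have key: "a - p (x - x1) \<le> p (y + x1) - b" if "(x, a) \<in> M" "(y, b) \<in> M" for x a y b
  proof -
    have "a + b \<le> p ((x - x1) + (y + x1))"
      using dominated_graph_le[OF M dominated_graph_add[OF M that]] by simp
    also have "\<dots> \<le> p (x - x1) + p (y + x1)" by (rule sub)
    finally show ?thesis by simp
  qed
  define c where "c = Sup {a - p (x - x1) | x a. (x, a) \<in> M}"
  have lower: "a - p (x - x1) \<le> c" if "(x, a) \<in> M" for x a
    unfolding c_def using that key[OF _ M0]
    by (intro cSup_upper) (auto simp: bdd_above_def)
  have upper: "c \<le> p (y + x1) - b" if "(y, b) \<in> M" for y b
    unfolding c_def using M0 key[OF _ that] by (intro cSup_least) auto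
  define M' where "M' = {(x + t *\<^sub>R x1, a + t * c) | x a t. (x, a) \<in> M}"
  have "dominated_graph p M'"
    unfolding M'_def using hom M x1 lower upper by (rule dominated_graph_extend_by)
  moreover have "M \<subseteq> M'"
    unfolding M'_def by (force intro: exI[of _ 0])
  moreover have "(x1, c) \<in> M'"
    unfolding M'_def using M0 by (intro CollectI exI[of _ 0] exI[of _ 0] exI[of _ 1]) simp
  ultimately show ?thesis using x1 by blast
qed

theorem Hahn_Banach_graph:
  fixes p :: "'z::real_vector \<Rightarrow> real"
  assumes sub: "\<And>x y. p (x + y) \<le> p x + p y"
    and hom: "\<And>x r. r > 0 \<Longrightarrow> p (r *\<^sub>R x) = r * p x"
    and G0: "dominated_graph p G0" and "G0 \<noteq> {}"
  shows "\<exists>L. linear L \<and> (\<forall>x. L x \<le> p x) \<and> (\<forall>x a. (x, a) \<in> G0 \<longrightarrow> L x = a)"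
proof -
  define \<A> where "\<A> = {G. dominated_graph p G \<and> G0 \<subseteq> G}"
  have "\<forall>\<C>\<in>chains \<A>. \<exists>U\<in>\<A>. \<forall>X\<in>\<C>. X \<subseteq> U"
  proof
    fix \<C> assume \<C>: "\<C> \<in> chains \<A>"
    show "\<exists>U\<in>\<A>. \<forall>X\<in>\<C>. X \<subseteq> U"
    proof (cases "\<C> = {}")
      case True
      then show ?thesis using G0 unfolding \<A>_def by blast
    next
      case False
      have "\<C> \<subseteq> \<A>" "chain\<^sub>\<subseteq> \<C>" using \<C> by (simp_all add: chains_def)
      then have "\<C> \<in> chains {G. dominated_graph p G}" by (auto simp: chains_def \<A>_def)
      then have "dominated_graph p (\<Union>\<C>)" by (rule dominated_graph_Union_chain)
      moreover have "G0 \<subseteq> \<Union>\<C>" using False \<open>\<C> \<subseteq> \<A>\<close> unfolding \<A>_def by blast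
      ultimately show ?thesis unfolding \<A>_def by blast
    qed
  qed
  from Zorn_Lemma2[OF this] obtain M
    where "M \<in> \<A>" and max: "\<And>X. X \<in> \<A> \<Longrightarrow> M \<subseteq> X \<Longrightarrow> X = M"
    by blast
  then have M: "dominated_graph p M" and G0M: "G0 \<subseteq> M" unfolding \<A>_def by auto
  obtain x0 a0 where "(x0, a0) \<in> M" using \<open>G0 \<noteq> {}\<close> G0M by auto
  from dominated_graph_scaleR[OF M this, of 0] have M0: "(0, 0) \<in> M" by simp
  have total: "\<exists>a. (x, a) \<in> M" for x
  proof (rule ccontr)
    assume "\<nexists>a. (x, a) \<in> M"
    then obtain M' where "dominated_graph p M'" "M \<subset> M'"
      using dominated_graph_extend[OF sub hom M M0] by blast
    moreover from this have "M' \<in> \<A>" using G0M unfolding \<A>_def by blast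
    ultimately show False using max[of M'] by blast
  qed
  define L where "L x = (THE a. (x, a) \<in> M)" for x
  have L_mem: "(x, L x) \<in> M" for x
  proof -
    have "\<exists>!a. (x, a) \<in> M" using total dominated_graph_unique[OF M] by blast
    then show ?thesis unfolding L_def by (rule theI')
  qed
  have L_eq: "L x = a" if "(x, a) \<in> M" for x a
    using dominated_graph_unique[OF M L_mem that] .
  have "linear L"
  proof (rule linearI)
    show "L (x + y) = L x + L y" for x y
      by (rule L_eq[OF dominated_graph_add[OF M L_mem L_mem]])
    show "L (r *\<^sub>R x) = r *\<^sub>R L x" for r x
      using L_eq[OF dominated_graph_scaleR[OF M L_mem]] by simp
  qed
  moreover have "L x \<le> p x" for x using dominated_graph_le[OF M L_mem] .
  moreover have "L x = a" if "(x, a) \<in> G0" for x a using L_eq that G0M by blast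
  ultimately show ?thesis by blast
qed

section \<open>The Minkowski functional\<close>

definition minkowski_functional :: "'z::real_vector set \<Rightarrow> 'z \<Rightarrow> real" where
  "minkowski_functional E x = Inf {r. 0 < r \<and> (1 / r) *\<^sub>R x \<in> E}"

context
  fixes E :: "'z::real_vector set"
  assumes cvx: "convex E" and E0: "0 \<in> E" and absorbing: "\<And>x. \<exists>d>0. d *\<^sub>R x \<in> E"
begin

private lemma minkowski_set_nonempty: "{r. 0 < r \<and> (1 / r) *\<^sub>R x \<in> E} \<noteq> {}"
proof -
  obtain d where "d > 0" "d *\<^sub>R x \<in> E" using absorbing by blast
  then have "1 / d \<in> {r. 0 < r \<and> (1 / r) *\<^sub>R x \<in> E}" by simp
  then show ?thesis by blast
qed

private lemma minkowski_functional_greatest: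
  "(\<And>r. 0 < r \<Longrightarrow> (1 / r) *\<^sub>R x \<in> E \<Longrightarrow> b \<le> r) \<Longrightarrow> b \<le> minkowski_functional E x"
  unfolding minkowski_functional_def by (rule cInf_greatest[OF minkowski_set_nonempty]) auto

lemma minkowski_functional_nonneg: "0 \<le> minkowski_functional E x"
  by (rule minkowski_functional_greatest) simp

lemma minkowski_functional_le: "0 < r \<Longrightarrow> (1 / r) *\<^sub>R x \<in> E \<Longrightarrow> minkowski_functional E x \<le> r"
  unfolding minkowski_functional_def by (rule cInf_lower) (auto intro: bdd_belowI[of _ 0])

lemma minkowski_functional_subadditive:
  "minkowski_functional E (x + y) \<le> minkowski_functional E x + minkowski_functional E y"
proof -
  have "minkowski_functional E (x + y) - s \<le> r"
    if r: "0 < r" "(1 / r) *\<^sub>R x \<in> E" and s: "0 < s" "(1 / s) *\<^sub>R y \<in> E" for r s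
  proof -
    have "(r / (r + s)) *\<^sub>R ((1 / r) *\<^sub>R x) + (s / (r + s)) *\<^sub>R ((1 / s) *\<^sub>R y) \<in> E"
      using convexD[OF cvx r(2) s(2), of "r / (r + s)" "s / (r + s)"] r s
      by (simp add: add_divide_distrib[symmetric])
    also have "(r / (r + s)) *\<^sub>R ((1 / r) *\<^sub>R x) + (s / (r + s)) *\<^sub>R ((1 / s) *\<^sub>R y)
        = (1 / (r + s)) *\<^sub>R (x + y)"
      using r s by (simp add: scaleR_add_right)
    finally show ?thesis using minkowski_functional_le[of "r + s"] r s by fastforce
  qed
  then have "minkowski_functional E (x + y) - minkowski_functional E x \<le> s"
    if "0 < s" "(1 / s) *\<^sub>R y \<in> E" for s
    using that minkowski_functional_greatest[of x "minkowski_functional E (x + y) - s"] by fastforce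
  then have "minkowski_functional E (x + y) - minkowski_functional E x \<le> minkowski_functional E y"
    by (rule minkowski_functional_greatest)
  then show ?thesis by simp
qed

lemma minkowski_functional_pos_homogeneous:
  assumes t: "0 < t"
  shows "minkowski_functional E (t *\<^sub>R x) = t * minkowski_functional E x"
proof (rule antisym)
  have "minkowski_functional E (t *\<^sub>R x) / t \<le> r" if "0 < r" "(1 / r) *\<^sub>R x \<in> E" for r
    using minkowski_functional_le[of "t * r" "t *\<^sub>R x"] that t by (simp add: divide_le_eq mult.commute)
  then have "minkowski_functional E (t *\<^sub>R x) / t \<le> minkowski_functional E x"
    by (rule minkowski_functional_greatest)
  then show "minkowski_functional E (t *\<^sub>R x) \<le> t * minkowski_functional E x"
    using t by (simp add: divide_le_eq mult.commute)
next
  have "t * minkowski_functional E x \<le> r" if "0 < r" "(1 / r) *\<^sub>R (t *\<^sub>R x) \<in> E" for r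
    using minkowski_functional_le[of "r / t" x] that t by (simp add: le_divide_eq mult.commute)
  then show "t * minkowski_functional E x \<le> minkowski_functional E (t *\<^sub>R x)"
    by (rule minkowski_functional_greatest)
qed

lemma mem_if_minkowski_functional_less_1:
  assumes "minkowski_functional E y < 1"
  shows "y \<in> E"
proof -
  obtain r where r: "0 < r" "r < 1" "(1 / r) *\<^sub>R y \<in> E"
    using cInf_lessD[OF minkowski_set_nonempty assms[unfolded minkowski_functional_def]] by blast
  have "r *\<^sub>R ((1 / r) *\<^sub>R y) + (1 - r) *\<^sub>R 0 \<in> E"
    using convexD[OF cvx r(3) E0, of r "1 - r"] r by simp
  then show ?thesis using r(1) by simp
qed

end

section \<open>Scalarizations, directional derivatives and the image space\<close>

lemma Inf_ereal_reals_above: "Inf {ereal t | t. c \<le> ereal t} = c"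
proof (cases c)
  case (real b)
  then show ?thesis by (intro antisym Inf_lower Inf_greatest) auto
next
  case PInf
  then show ?thesis by (simp add: top_ereal_def)
next
  case MInf
  have "Inf {ereal t | t. c \<le> ereal t} \<le> - \<infinity>"
    unfolding Inf_le_iff
  proof (intro allI impI)
    fix y :: ereal assume "- \<infinity> < y"
    then show "\<exists>a\<in>{ereal t | t. c \<le> ereal t}. a < y"
    proof (cases y)
      case (real r)
      then show ?thesis using MInf by (intro bexI[of _ "ereal (r - 1)"]) auto
    next
      case PInf
      then show ?thesis using MInf by (intro bexI[of _ "ereal 0"]) auto
    qed simp
  qed
  then show ?thesis using MInf by simp
qed

lemma inf_res_ereal: "inf_res r (ereal a) = r - ereal a"
proof -
  have "r \<le> inf_add (ereal a) (ereal t) \<longleftrightarrow> r - ereal a \<le> ereal t" for t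
    by (simp add: inf_add_def ereal_minus_le_iff add.commute)
  then show ?thesis
    unfolding inf_res_def by (simp add: Inf_ereal_reals_above)
qed

lemma dir_deriv_ereal:
  assumes "\<phi> x = ereal a"
  shows "dir_deriv \<phi> x u = (INF t\<in>{0<..}. ereal (1 / t) * (\<phi> (x + t *\<^sub>R u) - ereal a))"
  unfolding dir_deriv_def assms inf_res_ereal ..

lemma dir_deriv_nonneg_at_minimum:
  assumes "\<phi> x = ereal a" and min: "\<And>y. \<phi> x \<le> \<phi> y"
  shows "0 \<le> dir_deriv \<phi> x u"
  unfolding dir_deriv_ereal[where \<phi> = \<phi>, OF assms(1)]
proof (rule INF_greatest)
  fix t :: real assume "t \<in> {0<..}"
  moreover have "0 \<le> \<phi> (x + t *\<^sub>R u) - ereal a"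
    using min[of "x + t *\<^sub>R u"] assms(1) by (simp add: ereal_le_minus_iff)
  ultimately show "0 \<le> ereal (1 / t) * (\<phi> (x + t *\<^sub>R u) - ereal a)"
    by simp
qed

lemma dir_deriv_neg_if_descent:
  assumes "\<phi> x = ereal a" and "t > 0" and "\<phi> (x + t *\<^sub>R u) < \<phi> x"
  shows "dir_deriv \<phi> x u < 0"
proof -
  have "dir_deriv \<phi> x u \<le> ereal (1 / t) * (\<phi> (x + t *\<^sub>R u) - ereal a)"
    unfolding dir_deriv_ereal[where \<phi> = \<phi>, OF assms(1)] using assms(2) by (intro INF_lower) simp
  also have "\<dots> < 0"
    using assms by (simp add: ereal_mult_less_0_iff ereal_minus_less_iff)
  finally show ?thesis .
qed

lemma scal_fun_le: "z \<in> f x \<Longrightarrow> scal_fun f L x \<le> ereal (- L z)"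
  unfolding scal_fun_def by (rule Inf_lower) blast

lemma scal_fun_greatest: "(\<And>z. z \<in> f x \<Longrightarrow> b \<le> ereal (- L z)) \<Longrightarrow> b \<le> scal_fun f L x"
  unfolding scal_fun_def by (rule Inf_greatest) blast

lemma scal_fun_antimono: "f y \<subseteq> f x \<Longrightarrow> scal_fun f L x \<le> scal_fun f L y"
  by (intro scal_fun_greatest scal_fun_le) blast

lemma Gspace_closed: "A \<in> Gspace C \<Longrightarrow> closed A"
  unfolding Gspace_def by (metis (mono_tags) closed_closure mem_Collect_eq)

lemma Gspace_add_cone:
  assumes "A \<in> Gspace C" "a \<in> A" "c \<in> C"
  shows "a + c \<in> A"
proof -
  have "a + c \<in> {a + c | a c. a \<in> A \<and> c \<in> C}" using assms(2,3) by blast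
  then have "a + c \<in> closure (convex hull {a + c | a c. a \<in> A \<and> c \<in> C})"
    by (rule subsetD[OF closure_subset, OF hull_inc])
  then show ?thesis using assms(1) unfolding Gspace_def by blast
qed

lemma G_convex_combination:
  assumes "G_convex C f" "z \<in> f x" "w \<in> f y" "0 < t" "t < 1"
  shows "t *\<^sub>R z + (1 - t) *\<^sub>R w \<in> f (t *\<^sub>R x + (1 - t) *\<^sub>R y)"
proof -
  have "t *\<^sub>R z + (1 - t) *\<^sub>R w \<in> {a + b | a b. a \<in> (\<lambda>z. t *\<^sub>R z) ` f x \<and> b \<in> (\<lambda>z. (1 - t) *\<^sub>R z) ` f y}"
    using assms(2,3) by blast
  then have "t *\<^sub>R z + (1 - t) *\<^sub>R w \<in> oplus_set ((\<lambda>z. t *\<^sub>R z) ` f x) ((\<lambda>z. (1 - t) *\<^sub>R z) ` f y)"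
    unfolding oplus_set_def by (rule subsetD[OF closure_subset])
  then show ?thesis using assms(1,4,5) unfolding G_convex_def by blast
qed

lemma inf_image_eq_iff_image_subset:
  assumes "closed (f x0)" "convex (f x0)"
  shows "f x0 = inf_image f \<longleftrightarrow> (\<forall>x. f x \<subseteq> f x0)"
proof -
  have image_sub: "f x \<subseteq> inf_image f" for x
    unfolding inf_image_def
    by (rule subset_trans[OF _ closure_subset], rule subset_trans[OF _ hull_subset]) blast
  moreover have "inf_image f \<subseteq> f x0" if "\<forall>x. f x \<subseteq> f x0"
    unfolding inf_image_def using that assms by (intro closure_minimal hull_minimal) auto
  ultimately show ?thesis by blast
qed

lemma stampacchia_if_image_subset:
  assumes "f x0 \<noteq> {}" and sub: "\<And>y. f y \<subseteq> f x0"
  shows "scal_fun f L x0 = - \<infinity> \<or> 0 \<le> dir_deriv (scal_fun f L) x0 u"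
proof (cases "scal_fun f L x0")
  case (real a)
  have "scal_fun f L x0 \<le> scal_fun f L y" for y
    using sub by (rule scal_fun_antimono)
  then show ?thesis using dir_deriv_nonneg_at_minimum[where \<phi> = "scal_fun f L", OF real] by blast
next
  case PInf
  then show ?thesis using assms(1) scal_fun_le[of _ f x0 L] by fastforce
qed simp

section \<open>Separation in locally convex spaces\<close>

context
  assumes lc: "lc_tvs TYPE('z::{real_vector,t2_space})"
begin

lemma continuous_on_tvs_add:
  fixes f g :: "'a::topological_space \<Rightarrow> 'z"
  assumes "continuous_on S f" "continuous_on S g"
  shows "continuous_on S (\<lambda>x. f x + g x)"
  using continuous_on_compose2[OF _ continuous_on_Pair[OF assms], of UNIV "\<lambda>p. fst p + snd p"]
    lc unfolding lc_tvs_def by simp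

lemma continuous_on_tvs_scaleR:
  fixes f :: "'a::topological_space \<Rightarrow> 'z" and a :: "'a \<Rightarrow> real"
  assumes "continuous_on S a" "continuous_on S f"
  shows "continuous_on S (\<lambda>x. a x *\<^sub>R f x)"
  using continuous_on_compose2[OF _ continuous_on_Pair[OF assms], of UNIV "\<lambda>p. fst p *\<^sub>R snd p"]
    lc unfolding lc_tvs_def by simp

lemma open_vimage_tvs_affine:
  assumes "open (U :: 'z set)"
  shows "open ((\<lambda>w. r *\<^sub>R w + c) -` U)"
  by (intro open_vimage[OF assms] continuous_on_tvs_add continuous_on_tvs_scaleR
      continuous_on_const continuous_on_id)

lemma open_vimage_tvs_translation:
  assumes "open (U :: 'z set)"
  shows "open ((\<lambda>w. w + c) -` U)"
  using open_vimage_tvs_affine[OF assms, of 1 c] by simp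

lemma open_set_plus_tvs:
  assumes "open (V :: 'z set)"
  shows "open (S + V)"
proof -
  have eq: "S + V = (\<Union>s\<in>S. (\<lambda>w. w + (- s)) -` V)"
  proof (intro set_eqI iffI)
    fix w assume "w \<in> S + V"
    then obtain s v where "s \<in> S" "v \<in> V" "w = s + v" by (rule set_plus_elim)
    then show "w \<in> (\<Union>s\<in>S. (\<lambda>w. w + (- s)) -` V)" by (intro UN_I[of s]) auto
  next
    fix w assume "w \<in> (\<Union>s\<in>S. (\<lambda>w. w + (- s)) -` V)"
    then obtain s where "s \<in> S" "w + (- s) \<in> V" by auto
    then have "s + (w + (- s)) \<in> S + V" by (rule set_plus_intro)
    then show "w \<in> S + V" by simp
  qed
  show ?thesis unfolding eq by (intro open_UN ballI open_vimage_tvs_translation assms)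
qed

lemma open_tvs_line_nbhd:
  assumes "open (U :: 'z set)" "t0 *\<^sub>R x \<in> U"
  obtains e where "e > 0" "\<And>t. \<bar>t - t0\<bar> < e \<Longrightarrow> t *\<^sub>R x \<in> U"
proof -
  have "open ((\<lambda>t::real. t *\<^sub>R x) -` U)"
    by (intro open_vimage[OF assms(1)] continuous_on_tvs_scaleR continuous_on_id continuous_on_const)
  then obtain e where "e > 0" "\<And>t. dist t t0 < e \<Longrightarrow> t \<in> (\<lambda>t::real. t *\<^sub>R x) -` U"
    using assms(2) unfolding open_dist by blast
  then show ?thesis using that by (simp add: dist_real_def)
qed

lemma convex_closure_tvs:
  assumes "convex (S :: 'z set)"
  shows "convex (closure S)"
proof (rule convexI)
  fix x y and u v :: real
  assume xy: "x \<in> closure S" "y \<in> closure S" and uv: "0 \<le> u" "0 \<le> v" "u + v = 1"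
  define h where "h = (\<lambda>q::'z \<times> 'z. u *\<^sub>R fst q + v *\<^sub>R snd q)"
  have h: "continuous_on UNIV h"
    unfolding h_def by (intro continuous_on_tvs_add continuous_on_tvs_scaleR
        continuous_on_const continuous_on_fst continuous_on_snd continuous_on_id)
  have "h ` (S \<times> S) \<subseteq> closure S"
    using convexD[OF assms _ _ uv] closure_subset unfolding h_def by fastforce
  then have "h ` closure (S \<times> S) \<subseteq> closure S"
    by (intro image_closure_subset continuous_on_subset[OF h]) auto
  moreover have "(x, y) \<in> closure (S \<times> S)" using xy by (simp add: closure_Times)
  ultimately show "u *\<^sub>R x + v *\<^sub>R y \<in> closure S" unfolding h_def by force
qed

lemma open_tvs_absorbing:
  assumes "open (E :: 'z set)" "0 \<in> E"
  shows "\<exists>d>0. d *\<^sub>R x \<in> E"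
proof -
  obtain e where "e > 0" "\<And>t. \<bar>t\<bar> < e \<Longrightarrow> t *\<^sub>R x \<in> E"
    using open_tvs_line_nbhd[OF assms(1), of 0 x] assms(2) by auto
  then show ?thesis by (intro exI[of _ "e / 2"]) simp
qed

lemma minkowski_functional_less_1:
  assumes "open (E :: 'z set)" "convex E" "0 \<in> E" "x \<in> E"
  shows "minkowski_functional E x < 1"
proof -
  obtain e where e: "e > 0" "\<And>t. \<bar>t - 1\<bar> < e \<Longrightarrow> t *\<^sub>R x \<in> E"
    using open_tvs_line_nbhd[OF assms(1), of 1 x] assms(4) by auto
  have "(1 / (1 / (1 + e / 2))) *\<^sub>R x \<in> E" using e by simp
  then have "minkowski_functional E x \<le> 1 / (1 + e / 2)"
    using minkowski_functional_le[OF assms(2,3) open_tvs_absorbing[OF assms(1,3)]] e(1) by simp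
  also have "\<dots> < 1" using e(1) by simp
  finally show ?thesis .
qed

text \<open>A linear functional bounded above on a neighbourhood of \<open>0\<close> is continuous: by symmetry
  it is bounded in absolute value on a smaller neighbourhood, and translating and scaling that
  neighbourhood gives continuity everywhere.\<close>

lemma continuous_on_linear_if_bounded_on_open:
  assumes L: "linear (L :: 'z \<Rightarrow> real)" and E: "open E" "0 \<in> E" and LE: "\<And>e. e \<in> E \<Longrightarrow> L e < 1"
  shows "continuous_on UNIV L"
  unfolding continuous_on_topological
proof (intro ballI allI impI)
  fix x B assume "open B" "L x \<in> B"
  then obtain e where e: "e > 0" "\<And>t. dist t (L x) < e \<Longrightarrow> t \<in> B"
    unfolding open_dist by blast
  define N where "N = E \<inter> uminus -` E"
  have "open N"
    unfolding N_def using open_vimage_tvs_affine[OF E(1), of "- 1" 0] by (intro open_Int E(1)) simp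
  have LN: "\<bar>L n\<bar> < 1" if "n \<in> N" for n
    using LE[of n] LE[of "- n"] that linear_neg[OF L, of n] unfolding N_def by auto
  define A where "A = (\<lambda>w. (1 / e) *\<^sub>R w + (- (1 / e) *\<^sub>R x)) -` N"
  have "open A" unfolding A_def by (rule open_vimage_tvs_affine[OF \<open>open N\<close>])
  moreover have "x \<in> A" using E(2) unfolding A_def N_def by simp
  moreover have "L w \<in> B" if "w \<in> A" for w
  proof -
    have n: "(1 / e) *\<^sub>R (w - x) \<in> N" using that unfolding A_def by (simp add: scaleR_diff_right)
    have "\<bar>L w - L x\<bar> = e * \<bar>L ((1 / e) *\<^sub>R (w - x))\<bar>"
      using e(1) by (simp add: linear_scale[OF L] linear_diff[OF L] abs_mult)
    also have "\<dots> < e" using LN[OF n] e(1) by simp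
    finally show ?thesis using e(2) by (simp add: dist_real_def)
  qed
  ultimately show "\<exists>A. open A \<and> x \<in> A \<and> (\<forall>y\<in>UNIV. y \<in> A \<longrightarrow> L y \<in> B)" by blast
qed

text \<open>Hahn--Banach applied to the Minkowski functional \<open>p\<close> of \<open>E\<close>, extending the functional
  \<open>s y \<mapsto> s\<close> from the line through \<open>y\<close>, on which it is dominated because \<open>p y \<ge> 1\<close>.\<close>

lemma separation_open_convex:
  assumes E: "open (E :: 'z set)" "convex E" "0 \<in> E" and "y \<notin> E"
  obtains L :: "'z \<Rightarrow> real" where "linear L" "L y = 1" "\<And>e. e \<in> E \<Longrightarrow> L e < 1"
proof -
  note absorbing = open_tvs_absorbing[OF E(1,3)]
  define p where "p = minkowski_functional E"
  have p_sub: "p (x + z) \<le> p x + p z" for x z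
    unfolding p_def by (rule minkowski_functional_subadditive[OF E(2,3) absorbing])
  have p_hom: "p (r *\<^sub>R x) = r * p x" if "r > 0" for x r
    unfolding p_def using minkowski_functional_pos_homogeneous[OF E(2,3) absorbing that] .
  have "1 \<le> p y"
    using mem_if_minkowski_functional_less_1[OF E(2,3) absorbing] \<open>y \<notin> E\<close> unfolding p_def by force
  have "y \<noteq> 0" using \<open>y \<notin> E\<close> E(3) by auto
  have "dominated_graph p {(s *\<^sub>R y, s) | s. True}"
    unfolding dominated_graph_def
  proof (intro conjI allI impI)
    fix x a assume "(x, a) \<in> {(s *\<^sub>R y, s) | s. True}"
    then have x: "x = a *\<^sub>R y" by simp
    show "a \<le> p x"
    proof (cases "a > 0")
      case True
      then show ?thesis using x p_hom \<open>1 \<le> p y\<close> by simp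
    next
      case False
      then show ?thesis
        using minkowski_functional_nonneg[OF E(2,3) absorbing] unfolding p_def by (meson le_less_trans not_less)
    qed
  qed (use \<open>y \<noteq> 0\<close> in \<open>auto simp: scaleR_add_left\<close>)
  then obtain L where L: "linear L" "\<And>x. L x \<le> p x" "\<And>x a. (x, a) \<in> {(s *\<^sub>R y, s) | s. True} \<Longrightarrow> L x = a"
    using Hahn_Banach_graph[OF p_sub p_hom] by blast
  show ?thesis
  proof (rule that[OF L(1)])
    show "L y = 1" using L(3)[of y 1] by simp
    show "L e < 1" if "e \<in> E" for e
      using L(2)[of e] minkowski_functional_less_1[OF E(1,2,3) that] unfolding p_def by simp
  qed
qed

text \<open>A convex open neighbourhood \<open>V\<close> of \<open>0\<close> with \<open>z - V\<close> disjoint from \<open>K\<close> makes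
  \<open>(K - k0) + V\<close> an open convex neighbourhood of \<open>0\<close> missing \<open>z - k0\<close>.\<close>

theorem separation_closed_convex_point:
  assumes K: "closed (K :: 'z set)" "convex K" "k0 \<in> K" and "z \<notin> K"
  obtains L :: "'z \<Rightarrow> real" and \<delta>
  where "linear L" "continuous_on UNIV L" "\<delta> > 0" "\<And>k. k \<in> K \<Longrightarrow> L k \<le> L z - \<delta>"
proof -
  have "open ((\<lambda>w. (- 1) *\<^sub>R w + z) -` (- K))"
    using K(1) by (intro open_vimage_tvs_affine) (simp add: open_Compl)
  moreover have "0 \<in> (\<lambda>w. (- 1) *\<^sub>R w + z) -` (- K)" using \<open>z \<notin> K\<close> by simp
  ultimately obtain V where V: "open V" "convex V" "0 \<in> V" and V_sub: "\<And>v. v \<in> V \<Longrightarrow> z - v \<notin> K"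
    using lc unfolding lc_tvs_def by fastforce
  define E where "E = (\<lambda>k. k - k0) ` K + V"
  have "open E" unfolding E_def using V(1) by (rule open_set_plus_tvs)
  have "convex E"
    unfolding E_def using K(2) V(2) by (simp add: convex_set_plus convex_translation_subtract)
  have "0 \<in> E"
    unfolding E_def using set_plus_intro[OF imageI[OF K(3)] V(3), of "\<lambda>k. k - k0"] by simp
  have "z - k0 \<notin> E"
  proof
    assume "z - k0 \<in> E"
    then obtain k v where "k \<in> K" "v \<in> V" "z - k0 = k - k0 + v"
      unfolding E_def by (blast elim: set_plus_elim)
    then show False using V_sub[of v] by (simp add: algebra_simps)
  qed
  obtain L :: "'z \<Rightarrow> real" where L: "linear L" "L (z - k0) = 1" and LE: "\<And>e. e \<in> E \<Longrightarrow> L e < 1"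
    using separation_open_convex[OF \<open>open E\<close> \<open>convex E\<close> \<open>0 \<in> E\<close> \<open>z - k0 \<notin> E\<close>] by blast
  obtain d where d: "d > 0" "d *\<^sub>R (z - k0) \<in> V" using open_tvs_absorbing[OF V(1,3)] by blast
  have "L k \<le> L z - d" if "k \<in> K" for k
  proof -
    have "k - k0 + d *\<^sub>R (z - k0) \<in> E"
      unfolding E_def by (rule set_plus_intro[OF imageI[OF that] d(2)])
    moreover have "L (k - k0 + d *\<^sub>R (z - k0)) = L k - L k0 + d"
      using L by (simp add: linear_add linear_diff linear_scale flip: right_diff_distrib)
    ultimately show ?thesis using LE L(2) linear_diff[OF L(1), of z k0] by fastforce
  qed
  moreover have "continuous_on UNIV L"
    using continuous_on_linear_if_bounded_on_open[OF L(1) \<open>open E\<close> \<open>0 \<in> E\<close> LE] .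
  ultimately show ?thesis using that L(1) d(1) by blast
qed

lemma Gspace_convex: "(A :: 'z set) \<in> Gspace C \<Longrightarrow> convex A"
  unfolding Gspace_def by (metis (mono_tags) mem_Collect_eq convex_closure_tvs[OF convex_convex_hull])

lemma separation_neg_dual_cone:
  assumes "cone C" and K: "closed (K :: 'z set)" "convex K" "k0 \<in> K"
    and KC: "\<And>k c. k \<in> K \<Longrightarrow> c \<in> C \<Longrightarrow> k + c \<in> K" and "z \<notin> K"
  obtains L \<delta> where "L \<in> neg_dual_cone C - {\<lambda>_. 0}" "\<delta> > 0" "\<And>k. k \<in> K \<Longrightarrow> L k \<le> L z - \<delta>"
proof -
  obtain L :: "'z \<Rightarrow> real" and \<delta> where L: "linear L" "continuous_on UNIV L" "\<delta> > 0"
    and sep: "\<And>k. k \<in> K \<Longrightarrow> L k \<le> L z - \<delta>"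
    using separation_closed_convex_point[OF K \<open>z \<notin> K\<close>] by blast
  \<comment> \<open>otherwise \<open>L\<close> is unbounded above on the ray \<open>k0 + n c\<close>, which stays in \<open>K\<close>\<close>
  have "L c \<le> 0" if "c \<in> C" for c
  proof (rule ccontr)
    assume "\<not> L c \<le> 0"
    define n where "n = (L z - L k0) / L c + 1"
    have "n \<ge> 0" "n * L c = L z - L k0 + L c"
      using sep[OF K(3)] L(3) \<open>\<not> L c \<le> 0\<close> by (auto simp: n_def field_simps)
    then have "k0 + n *\<^sub>R c \<in> K" using KC[OF K(3)] \<open>cone C\<close> that unfolding cone_def by blast
    from sep[OF this] show False
      using \<open>n * L c = _\<close> L(3) \<open>\<not> L c \<le> 0\<close> by (simp add: linear_add[OF L(1)] linear_scale[OF L(1)])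
  qed
  moreover have "L \<noteq> (\<lambda>_. 0)" using sep[OF K(3)] L(3) by auto
  ultimately have "L \<in> neg_dual_cone C - {\<lambda>_. 0}"
    using L(1,2) unfolding neg_dual_cone_def top_dual_def by blast
  then show ?thesis using that L(3) sep by blast
qed

lemma image_subset_if_stampacchia:
  fixes f :: "'x::real_vector \<Rightarrow> 'z set"
  assumes "closed_convex_cone C" "G_convex C f" "f x0 \<noteq> {}"
    and stampacchia: "\<forall>x. \<forall>L \<in> neg_dual_cone C - {\<lambda>_. 0}.
            scal_fun f L x0 = -\<infinity> \<or> 0 \<le> dir_deriv (scal_fun f L) x0 (x - x0)"
  shows "f x \<subseteq> f x0"
proof
  fix z assume "z \<in> f x"
  show "z \<in> f x0"
  proof (rule ccontr)
    assume "z \<notin> f x0"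
    have fx0: "f x0 \<in> Gspace C" using assms(2) unfolding G_convex_def by blast
    obtain k0 where "k0 \<in> f x0" using assms(3) by blast
    obtain L \<delta> where L: "L \<in> neg_dual_cone C - {\<lambda>_. 0}" and "\<delta> > 0"
      and sep: "\<And>k. k \<in> f x0 \<Longrightarrow> L k \<le> L z - \<delta>"
      using separation_neg_dual_cone[OF _ Gspace_closed[OF fx0] Gspace_convex[OF fx0] \<open>k0 \<in> f x0\<close>
          Gspace_add_cone[OF fx0] \<open>z \<notin> f x0\<close>] assms(1)
      unfolding closed_convex_cone_def by blast
    have linear: "linear L" using L unfolding neg_dual_cone_def top_dual_def by blast
    define \<phi> where "\<phi> = scal_fun f L"
    have "ereal (- L z + \<delta>) \<le> \<phi> x0"
      unfolding \<phi>_def using sep by (intro scal_fun_greatest) fastforce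
    moreover have "\<phi> x0 \<le> ereal (- L k0)"
      unfolding \<phi>_def using \<open>k0 \<in> f x0\<close> by (rule scal_fun_le)
    ultimately obtain a where a: "\<phi> x0 = ereal a" and "- L z + \<delta> \<le> a"
      by (cases "\<phi> x0") auto
    have "\<phi> x0 < ereal (a + \<delta>)" using a \<open>\<delta> > 0\<close> by simp
    then obtain z' where "z' \<in> f x0" "- L z' < a + \<delta>"
      unfolding \<phi>_def scal_fun_def Inf_less_iff by auto
    define m where "m = (1 / 2) *\<^sub>R z + (1 - 1 / 2) *\<^sub>R z'"
    have "m \<in> f ((1 / 2) *\<^sub>R x + (1 - 1 / 2) *\<^sub>R x0)"
      unfolding m_def using G_convex_combination[OF assms(2) \<open>z \<in> f x\<close> \<open>z' \<in> f x0\<close>, of "1 / 2"] by simp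
    moreover have "(1 / 2) *\<^sub>R x + (1 - 1 / 2) *\<^sub>R x0 = x0 + (1 / 2) *\<^sub>R (x - x0)"
      by (simp only: scaleR_diff_left scaleR_diff_right scaleR_one) (simp add: algebra_simps)
    ultimately have "\<phi> (x0 + (1 / 2) *\<^sub>R (x - x0)) \<le> ereal (- L m)"
      unfolding \<phi>_def by (simp add: scal_fun_le)
    also have "ereal (- L m) < \<phi> x0"
      using a \<open>- L z + \<delta> \<le> a\<close> \<open>- L z' < a + \<delta>\<close>
      by (simp add: m_def linear_add[OF linear] linear_scale[OF linear])
    finally have "\<phi> (x0 + (1 / 2) *\<^sub>R (x - x0)) < \<phi> x0" .
    from dir_deriv_neg_if_descent[where \<phi> = \<phi>, OF a _ this]
    have "dir_deriv \<phi> x0 (x - x0) < 0" by simp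
    moreover have "0 \<le> dir_deriv \<phi> x0 (x - x0)"
      using stampacchia[rule_format, OF L, of x] a unfolding \<phi>_def by auto
    ultimately show False by simp
  qed
qed

end

theorem mainTheorem1:
  fixes C :: "'z::{real_vector,t2_space} set"
    and f :: "'x::real_vector \<Rightarrow> 'z set"
    and x0 :: 'x
  assumes "lc_tvs TYPE('z)"
    and "closed_convex_cone C"
    and "neg_dual_cone C - {\<lambda>_. 0} \<noteq> {}"
    and "G_convex C f"
    and "x0 \<in> dom_G f"
  shows "(\<forall>x. \<forall>zs \<in> neg_dual_cone C - {\<lambda>_. 0}.
            scal_fun f zs x0 = -\<infinity> \<or> 0 \<le> dir_deriv (scal_fun f zs) x0 (x - x0))
         \<longleftrightarrow> f x0 = inf_image f"
proof -
  have fx0: "f x0 \<in> Gspace C" using assms(4) unfolding G_convex_def by blast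
  have ne: "f x0 \<noteq> {}" using assms(5) unfolding dom_G_def by blast
  have inf_image_iff: "f x0 = inf_image f \<longleftrightarrow> (\<forall>x. f x \<subseteq> f x0)"
    using Gspace_closed[OF fx0] Gspace_convex[OF assms(1) fx0] by (rule inf_image_eq_iff_image_subset)
  show ?thesis
  proof
    assume "\<forall>x. \<forall>zs \<in> neg_dual_cone C - {\<lambda>_. 0}.
      scal_fun f zs x0 = -\<infinity> \<or> 0 \<le> dir_deriv (scal_fun f zs) x0 (x - x0)"
    from image_subset_if_stampacchia[OF assms(1,2,4) ne this]
    show "f x0 = inf_image f" unfolding inf_image_iff by blast
  next
    assume "f x0 = inf_image f"
    then have "\<And>x. f x \<subseteq> f x0" unfolding inf_image_iff by blast
    from stampacchia_if_image_subset[where f = f, OF ne this]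
    show "\<forall>x. \<forall>zs \<in> neg_dual_cone C - {\<lambda>_. 0}.
      scal_fun f zs x0 = -\<infinity> \<or> 0 \<le> dir_deriv (scal_fun f zs) x0 (x - x0)" by blast
  qed
qed

end
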